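(* Let $p_{01},p_{11},p_{02},p_{12}\in\overline{\mathbb C}$ with $p_{02}=p_{12}$, such that $p_{02},p_{01},p_{11}$ are three distinct points. Let $m_0(\varepsilon),m_1(\varepsilon)$, $\varepsilon>0$, be hyperbolic Möbius transformations, with $\mu_0,\mu_1$ their multipliers at the attracting fixed points. Let $p_{01,\varepsilon},p_{12,\varepsilon}$ be the attracting and $p_{02,\varepsilon},p_{11,\varepsilon}$ the repelling fixed points of $m_0,m_1$ respectively. Assume $p_{ij,\varepsilon}\to p_{ij}$ and $\mu_i\to0$ as $\varepsilon\to0$. Assume $m_0m_1$ converges to a Möbius transformation $m$ such that for every $k\in\mathbb Z\setminus\{0\}$, $i\in\{0,1\}$, $j\in\{1,2\}$, the point $m^kp_{ij}$ differs from every $p_{ls}$ with $(l,s)\ne(i,j)$. Let $\widetilde m=m_{j_N}^{s_N}\cdots m_{j_1}^{s_1}$ be a reduced word such that $m_{j_N}^{s_N}m_{j_{N-1}}^{s_{N-1}}\ne(m_0m_1)^{\pm1}$ literally. Let $x\in\overline{\mathbb C}$ be such that $m^sx\ne p_{ij}$ for all $s=-N,\dots,N$, $i=0,1$, $j=1,2$. Then $\widetilde m x$ converges, as $\varepsilon\to0$, to the limit of the attracting fixed point of $m_{j_N}^{s_N}$.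
   Context: A Möbius transformation is hyperbolic if it has a repelling fixed point; then it has a unique attracting fixed point (the attracting fixed point of its inverse is its repeller). The multiplier at a fixed point is the derivative there. A word $m_{j_N}^{s_N}\cdots m_{j_1}^{s_1}$ has $N\ge1$, $j_l\in\{0,1\}$, $s_l=\pm1$, with no adjacent pair literally of the form $m_jm_j^{-1}$ or $m_j^{-1}m_j$. It is reduced if it is not literally $m_0m_1\cdots m_0m_1$ nor $m_1^{-1}m_0^{-1}\cdots m_1^{-1}m_0^{-1}$. The condition on the last two letters is understood literally: the pair $m_{j_N}^{s_N}m_{j_{N-1}}^{s_{N-1}}$ is neither $m_0m_1$ nor $m_1^{-1}m_0^{-1}$ (for $N=1$ the condition is vacuous). *)

theory Defs
  imports "HOL-Analysis.Analysis"
begin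

text \<open>The extended complex plane: None is the point at infinity.
  Its topology is the one of the unit sphere in R^3, via inverse stereographic projection.\<close>

type_synonym ecomplex = "complex option"

definition to_sphere :: "ecomplex \<Rightarrow> real \<times> real \<times> real" where
  "to_sphere z = (case z of
      None \<Rightarrow> (0, 0, 1)
    | Some w \<Rightarrow> (2 * Re w / (1 + (cmod w)^2), 2 * Im w / (1 + (cmod w)^2),
                 ((cmod w)^2 - 1) / ((cmod w)^2 + 1)))"

definition sconv :: "('b \<Rightarrow> ecomplex) \<Rightarrow> ecomplex \<Rightarrow> 'b filter \<Rightarrow> bool" where
  "sconv f L F \<longleftrightarrow> ((\<lambda>e. to_sphere (f e)) \<longlongrightarrow> to_sphere L) F"

type_synonym mat = "complex \<times> complex \<times> complex \<times> complex"

definition mdet :: "mat \<Rightarrow> complex" where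
  "mdet M = (case M of (a, b, c, d) \<Rightarrow> a * d - b * c)"

definition mmul :: "mat \<Rightarrow> mat \<Rightarrow> mat" where
  "mmul M N = (case M of (a, b, c, d) \<Rightarrow> case N of (a', b', c', d') \<Rightarrow>
      (a * a' + b * c', a * b' + b * d', c * a' + d * c', c * b' + d * d'))"

definition mid :: mat where "mid = (1, 0, 0, 1)"

definition minv :: "mat \<Rightarrow> mat" where
  "minv M = (case M of (a, b, c, d) \<Rightarrow> (d, -b, -c, a))"

definition msmul :: "complex \<Rightarrow> mat \<Rightarrow> mat" where
  "msmul l M = (case M of (a, b, c, d) \<Rightarrow> (l * a, l * b, l * c, l * d))"

definition mpow :: "mat \<Rightarrow> int \<Rightarrow> mat" where
  "mpow M k = (if 0 \<le> k then ((mmul M) ^^ nat k) mid else ((mmul (minv M)) ^^ nat (- k)) mid)"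

definition mob_app :: "mat \<Rightarrow> ecomplex \<Rightarrow> ecomplex" where
  "mob_app M z = (case M of (a, b, c, d) \<Rightarrow>
     (case z of
        None \<Rightarrow> (if c = 0 then None else Some (a / c))
      | Some w \<Rightarrow> (if c * w + d = 0 then None else Some ((a * w + b) / (c * w + d)))))"

definition is_fixed :: "mat \<Rightarrow> ecomplex \<Rightarrow> bool" where
  "is_fixed M z \<longleftrightarrow> mob_app M z = z"

text \<open>Multiplier at a fixed point = derivative there (in the chart 1/z at infinity,
  where the map reads w \<mapsto> 1 / f(1/w) = (c + d w)/(a + b w)).\<close>
definition multiplier :: "mat \<Rightarrow> ecomplex \<Rightarrow> complex" where
  "multiplier M z = (case M of (a, b, c, d) \<Rightarrow>
     (case z of
        None \<Rightarrow> deriv (\<lambda>w. (c + d * w) / (a + b * w)) 0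
      | Some p \<Rightarrow> deriv (\<lambda>w. (a * w + b) / (c * w + d)) p))"

definition attracting_fp :: "mat \<Rightarrow> ecomplex \<Rightarrow> bool" where
  "attracting_fp M z \<longleftrightarrow> is_fixed M z \<and> cmod (multiplier M z) < 1"

definition repelling_fp :: "mat \<Rightarrow> ecomplex \<Rightarrow> bool" where
  "repelling_fp M z \<longleftrightarrow> is_fixed M z \<and> cmod (multiplier M z) > 1"

definition hyperbolic :: "mat \<Rightarrow> bool" where
  "hyperbolic M \<longleftrightarrow> (\<exists>z. repelling_fp M z)"

text \<open>A word m_{j_N}^{s_N} ... m_{j_1}^{s_1} is the list w with w ! (l-1) = (j_l, s_l),
  i.e. the head of the list is the rightmost letter (applied first), last w is the leftmost.\<close>

definition letter :: "mat \<Rightarrow> mat \<Rightarrow> nat \<times> int \<Rightarrow> mat" where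
  "letter M0 M1 js = (case js of (j, s) \<Rightarrow>
     (let M = (if j = 0 then M0 else M1) in if s = 1 then M else minv M))"

definition word_mat :: "mat \<Rightarrow> mat \<Rightarrow> (nat \<times> int) list \<Rightarrow> mat" where
  "word_mat M0 M1 w = foldl (\<lambda>acc l. mmul (letter M0 M1 l) acc) mid w"

definition is_word :: "(nat \<times> int) list \<Rightarrow> bool" where
  "is_word w \<longleftrightarrow> w \<noteq> [] \<and> (\<forall>l \<in> set w. fst l \<in> {0, 1} \<and> snd l \<in> {1, -1})
     \<and> (\<forall>i. Suc i < length w \<longrightarrow>
           \<not> (fst (w ! Suc i) = fst (w ! i) \<and> snd (w ! Suc i) = - snd (w ! i)))"

text \<open>Reduced: not literally m_0 m_1 ... m_0 m_1 nor m_1^{-1} m_0^{-1} ... m_1^{-1} m_0^{-1}.\<close>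
definition reduced_word :: "(nat \<times> int) list \<Rightarrow> bool" where
  "reduced_word w \<longleftrightarrow> is_word w \<and>
     (\<forall>k::nat. w \<noteq> concat (replicate k [(1, 1), (0, 1)])
             \<and> w \<noteq> concat (replicate k [(0, -1), (1, -1)]))"

end

theory Submission
  imports Defs
begin

text \<open>Points of the sphere are lines in \<open>\<complex>\<^sup>2\<close>, and a family of points converges iff
  suitably rescaled representatives converge to a nonzero vector. A letter \<open>m\<^sub>j\<^sup>s\<close> has
  eigenvectors over its two fixed points, and the ratio of its eigenvalues is its multiplier at
  the attracting fixed point. As this tends to \<open>0\<close>, the letter sends every family whose limit
  is not the limit of its repelling fixed point to the limit of its attracting one. Reading
  the word from the right, each block \<open>(m\<^sub>0 m\<^sub>1)\<^sup>\<plusminus>\<^sup>1\<close> converges to \<open>m\<^sup>\<plusminus>\<^sup>1\<close>, so every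
  other letter is applied to a family converging to \<open>m\<^sup>k x\<close> or to \<open>m\<^sup>k\<close> of the attractor of
  an earlier letter. The orbit hypotheses on \<open>m\<close> and \<open>x\<close>, together with the absence of
  cancellations, ensure that this point is never the repeller of the letter, and induction on
  the length leaves the attractor of the leftmost letter.\<close>

section \<open>Homogeneous coordinates\<close>

type_synonym vec = "complex \<times> complex"

definition mat_vec :: "mat \<Rightarrow> vec \<Rightarrow> vec" where
  "mat_vec A v = (fst A * fst v + fst (snd A) * snd v,
                  fst (snd (snd A)) * fst v + snd (snd (snd A)) * snd v)"

definition vscale :: "complex \<Rightarrow> vec \<Rightarrow> vec" where
  "vscale c v = (c * fst v, c * snd v)"

definition vdet :: "vec \<Rightarrow> vec \<Rightarrow> complex" where
  "vdet v w = fst v * snd w - fst w * snd v"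

text \<open>\<open>vproj 0 = None\<close> is a junk value.\<close>
definition vproj :: "vec \<Rightarrow> ecomplex" where
  "vproj v = (if snd v = 0 then None else Some (fst v / snd v))"

definition hom_coords :: "ecomplex \<Rightarrow> vec" where
  "hom_coords z = (case z of None \<Rightarrow> (1, 0) | Some w \<Rightarrow> (w, 1))"

lemma mat_vec_simps [simp]: "mat_vec (a, b, c, d) (u, v) = (a * u + b * v, c * u + d * v)"
  by (simp add: mat_vec_def)

lemma vscale_simps [simp]: "vscale c (u, v) = (c * u, c * v)"
  by (simp add: vscale_def)

lemma mat_vec_mmul: "mat_vec (mmul A B) v = mat_vec A (mat_vec B v)"
  by (cases A; cases B; cases v) (simp add: mmul_def algebra_simps)

lemma mat_vec_mid [simp]: "mat_vec mid v = v"
  by (cases v) (simp add: mid_def)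

lemma mat_vec_minv: "mat_vec (minv A) (mat_vec A v) = vscale (mdet A) v"
  by (cases A; cases v) (simp add: minv_def mdet_def algebra_simps)

lemma mat_vec_vscale: "mat_vec A (vscale c v) = vscale c (mat_vec A v)"
  by (cases A; cases v) (simp add: algebra_simps)

lemma mat_vec_add: "mat_vec A (v + w) = mat_vec A v + mat_vec A w"
  by (cases A; cases v; cases w) (simp add: algebra_simps)

lemma vscale_add: "vscale c (v + w) = vscale c v + vscale c w"
  by (cases v; cases w) (simp add: algebra_simps)

lemma mat_vec_msmul: "mat_vec (msmul c A) v = vscale c (mat_vec A v)"
  by (cases A; cases v) (simp add: msmul_def algebra_simps)

lemma vscale_vscale [simp]: "vscale a (vscale b v) = vscale (a * b) v"
  by (cases v) simp

lemma vscale_one [simp]: "vscale 1 v = v"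
  by (cases v) simp

lemma vscale_0_left [simp]: "vscale 0 v = 0"
  by (cases v) (simp add: zero_prod_def)

lemma vscale_eq_0_iff [simp]: "vscale c v = 0 \<longleftrightarrow> c = 0 \<or> v = 0"
  by (cases v) (auto simp: zero_prod_def)

lemma vscale_cancel: "c \<noteq> 0 \<Longrightarrow> vscale c v = vscale c w \<Longrightarrow> v = w"
  by (cases v; cases w) simp

lemma vdet_vscale: "vdet (vscale a v) (vscale b w) = a * b * vdet v w"
  by (cases v; cases w) (simp add: vdet_def algebra_simps)

lemma vdet_swap: "vdet w v = - vdet v w"
  by (simp add: vdet_def)

lemma vdet_mat_vec: "vdet (mat_vec A v) (mat_vec A w) = mdet A * vdet v w"
  by (cases A; cases v; cases w) (simp add: vdet_def mdet_def algebra_simps)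

lemma vdet_nonzero_imp_nonzero: "vdet v w \<noteq> 0 \<Longrightarrow> v \<noteq> 0 \<and> w \<noteq> 0"
  by (auto simp: vdet_def zero_prod_def)

text \<open>Cramer's rule.\<close>
lemma vec_decomp:
  assumes "vdet a r \<noteq> 0"
  shows "g = vscale (vdet g r / vdet a r) a + vscale (vdet a g / vdet a r) r"
proof -
  obtain a1 a2 r1 r2 g1 g2 where v: "a = (a1, a2)" "r = (r1, r2)" "g = (g1, g2)"
    by (cases a; cases r; cases g)
  define D where "D = a1 * r2 - r1 * a2"
  have "D \<noteq> 0"
    using assms by (simp add: v D_def vdet_def)
  moreover have "(g1 * r2 - r1 * g2) * a1 + (a1 * g2 - g1 * a2) * r1 = g1 * D"
    "(g1 * r2 - r1 * g2) * a2 + (a1 * g2 - g1 * a2) * r2 = g2 * D"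
    by (simp_all add: D_def algebra_simps)
  ultimately show ?thesis
    by (simp add: v vdet_def D_def[symmetric] add_divide_distrib[symmetric])
qed

lemma minv_mmul: "minv (mmul A B) = mmul (minv B) (minv A)"
  by (cases A; cases B) (simp add: mmul_def minv_def algebra_simps)

lemma minv_msmul: "minv (msmul c A) = msmul c (minv A)"
  by (cases A) (simp add: msmul_def minv_def)

lemma mdet_mmul: "mdet (mmul A B) = mdet A * mdet B"
  by (cases A; cases B) (simp add: mmul_def mdet_def algebra_simps)

lemma mdet_minv [simp]: "mdet (minv A) = mdet A"
  by (cases A) (simp add: minv_def mdet_def algebra_simps)

lemma mat_vec_nonzero:
  assumes "mdet A \<noteq> 0" "v \<noteq> 0"
  shows "mat_vec A v \<noteq> 0"
proof
  assume "mat_vec A v = 0"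
  then have "mat_vec (minv A) (mat_vec A v) = 0"
    by (cases A) (simp add: zero_prod_def minv_def)
  with assms show False
    by (simp add: mat_vec_minv)
qed

lemma vproj_vscale: "c \<noteq> 0 \<Longrightarrow> vproj (vscale c v) = vproj v"
  by (cases v) (simp add: vproj_def)

lemma vproj_eq_iff:
  assumes "v \<noteq> 0" "w \<noteq> 0"
  shows "vproj v = vproj w \<longleftrightarrow> vdet v w = 0"
  using assms by (cases v; cases w) (auto simp: vproj_def vdet_def zero_prod_def field_simps)

lemma hom_coords_nonzero [simp]: "hom_coords z \<noteq> 0"
  by (cases z) (auto simp: hom_coords_def zero_prod_def)

lemma vproj_hom_coords [simp]: "vproj (hom_coords z) = z"
  by (cases z) (auto simp: hom_coords_def vproj_def)

lemma mob_app_vproj: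
  assumes "v \<noteq> 0"
  shows "mob_app A (vproj v) = vproj (mat_vec A v)"
proof -
  obtain a b c d where A: "A = (a, b, c, d)" by (cases A)
  obtain u w where v: "v = (u, w)" by (cases v)
  show ?thesis
  proof (cases "w = 0")
    case True
    with assms v show ?thesis
      by (simp add: A vproj_def mob_app_def zero_prod_def)
  next
    case False
    then have "a * (u / w) + b = (a * u + b * w) / w" "c * (u / w) + d = (c * u + d * w) / w"
      by (simp_all add: field_simps)
    with False show ?thesis
      by (simp add: A v vproj_def mob_app_def)
  qed
qed

lemma mob_app_eq_vproj: "mob_app A z = vproj (mat_vec A (hom_coords z))"
  using mob_app_vproj[OF hom_coords_nonzero, of A z] by simp

lemma mob_app_mid [simp]: "mob_app mid z = z"
  by (simp add: mob_app_eq_vproj)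

lemma mob_app_msmul: "c \<noteq> 0 \<Longrightarrow> mob_app (msmul c A) z = mob_app A z"
  by (simp add: mob_app_eq_vproj mat_vec_msmul vproj_vscale)

lemma mob_app_mmul:
  assumes "mdet B \<noteq> 0"
  shows "mob_app (mmul A B) z = mob_app A (mob_app B z)"
  using mob_app_vproj[OF mat_vec_nonzero[OF assms hom_coords_nonzero]]
  by (simp add: mob_app_eq_vproj mat_vec_mmul)

lemma mmul_minv_right: "mmul A (minv A) = msmul (mdet A) mid"
  by (cases A) (simp add: mmul_def minv_def msmul_def mid_def mdet_def algebra_simps)

lemma mmul_minv_left: "mmul (minv A) A = msmul (mdet A) mid"
  by (cases A) (simp add: mmul_def minv_def msmul_def mid_def mdet_def algebra_simps)

lemma mob_app_minv_right: "mdet A \<noteq> 0 \<Longrightarrow> mob_app A (mob_app (minv A) z) = z"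
  by (simp add: mob_app_mmul[symmetric] mmul_minv_right mob_app_msmul)

lemma mob_app_minv_left: "mdet A \<noteq> 0 \<Longrightarrow> mob_app (minv A) (mob_app A z) = z"
  by (simp add: mob_app_mmul[symmetric] mmul_minv_left mob_app_msmul)

lemma mdet_mid [simp]: "mdet mid = 1"
  by (simp add: mdet_def mid_def)

lemma mdet_funpow_mmul: "mdet ((mmul A ^^ n) mid) = mdet A ^ n"
  by (induction n) (simp_all add: mdet_mmul)

lemma mdet_mpow_nonzero: "mdet M \<noteq> 0 \<Longrightarrow> mdet (mpow M k) \<noteq> 0"
  by (simp add: mpow_def mdet_funpow_mmul)

lemma mpow_0 [simp]: "mpow M 0 = mid"
  by (simp add: mpow_def)

lemma mob_app_mpow_add1:
  assumes "mdet M \<noteq> 0"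
  shows "mob_app (mpow M (k + 1)) z = mob_app M (mob_app (mpow M k) z)"
proof (cases "0 \<le> k")
  case True
  then have "nat (k + 1) = Suc (nat k)"
    by simp
  with True have "mpow M (k + 1) = mmul M (mpow M k)"
    by (simp add: mpow_def)
  then show ?thesis
    by (simp add: mob_app_mmul mdet_mpow_nonzero[OF assms])
next
  case False
  then have "nat (- k) = Suc (nat (- (k + 1)))"
    by simp
  with False have "mpow M k = mmul (minv M) (mpow M (k + 1))"
    by (simp add: mpow_def)
  then show ?thesis
    by (simp add: mob_app_mmul mdet_mpow_nonzero[OF assms] mob_app_minv_right[OF assms])
qed

lemma mob_app_mpow_diff1:
  assumes "mdet M \<noteq> 0"
  shows "mob_app (mpow M (k - 1)) z = mob_app (minv M) (mob_app (mpow M k) z)"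
  using mob_app_mpow_add1[OF assms, of "k - 1" z] mob_app_minv_left[OF assms] by simp

section \<open>Convergence on the sphere\<close>

definition proj_tendsto :: "('b \<Rightarrow> vec) \<Rightarrow> ecomplex \<Rightarrow> 'b filter \<Rightarrow> bool" where
  "proj_tendsto G q F \<longleftrightarrow> (\<exists>c y. y \<noteq> 0 \<and> vproj y = q \<and> (\<forall>\<^sub>F e in F. c e \<noteq> 0) \<and>
     ((\<lambda>e. vscale (c e) (G e)) \<longlongrightarrow> y) F)"

lemma proj_tendstoI:
  assumes "((\<lambda>e. vscale (c e) (G e)) \<longlongrightarrow> y) F" "\<forall>\<^sub>F e in F. c e \<noteq> 0" "y \<noteq> 0"
  shows "proj_tendsto G (vproj y) F"
  using assms unfolding proj_tendsto_def by blast

lemma proj_tendstoE: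
  assumes "proj_tendsto G q F"
  obtains c y where "((\<lambda>e. vscale (c e) (G e)) \<longlongrightarrow> y) F" "\<forall>\<^sub>F e in F. c e \<noteq> 0"
    "y \<noteq> 0" "vproj y = q"
  using assms unfolding proj_tendsto_def by blast

lemma proj_tendsto_const: "v \<noteq> 0 \<Longrightarrow> proj_tendsto (\<lambda>e. v) (vproj v) F"
  by (rule proj_tendstoI[where c = "\<lambda>e. 1"]) auto

lemma tendsto_mat_vec [tendsto_intros]:
  "(A \<longlongrightarrow> A0) F \<Longrightarrow> (v \<longlongrightarrow> v0) F \<Longrightarrow> ((\<lambda>e. mat_vec (A e) (v e)) \<longlongrightarrow> mat_vec A0 v0) F"
  unfolding mat_vec_def by (intro tendsto_intros)

lemma tendsto_vscale [tendsto_intros]: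
  "(c \<longlongrightarrow> c0) F \<Longrightarrow> (v \<longlongrightarrow> v0) F \<Longrightarrow> ((\<lambda>e. vscale (c e) (v e)) \<longlongrightarrow> vscale c0 v0) F"
  unfolding vscale_def by (intro tendsto_intros)

lemma tendsto_vdet [tendsto_intros]:
  "(v \<longlongrightarrow> v0) F \<Longrightarrow> (w \<longlongrightarrow> w0) F \<Longrightarrow> ((\<lambda>e. vdet (v e) (w e)) \<longlongrightarrow> vdet v0 w0) F"
  unfolding vdet_def by (intro tendsto_intros)

lemma tendsto_minv:
  assumes "(A \<longlongrightarrow> A0) F"
  shows "((\<lambda>e. minv (A e)) \<longlongrightarrow> minv A0) F"
proof -
  have minv_eq: "minv B = (snd (snd (snd B)), - fst (snd B), - fst (snd (snd B)), fst B)" for B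
    by (cases B) (simp add: minv_def)
  show ?thesis
    unfolding minv_eq by (intro tendsto_intros assms)
qed

lemma proj_tendsto_mat_vec:
  assumes G: "proj_tendsto G q F"
    and A: "((\<lambda>e. msmul (l e) (A e)) \<longlongrightarrow> A0) F" "\<forall>\<^sub>F e in F. l e \<noteq> 0"
    and A0: "mdet A0 \<noteq> 0"
  shows "proj_tendsto (\<lambda>e. mat_vec (A e) (G e)) (mob_app A0 q) F"
proof -
  obtain c y where y: "((\<lambda>e. vscale (c e) (G e)) \<longlongrightarrow> y) F" "\<forall>\<^sub>F e in F. c e \<noteq> 0"
    "y \<noteq> 0" "vproj y = q"
    using G by (rule proj_tendstoE)
  have "((\<lambda>e. mat_vec (msmul (l e) (A e)) (vscale (c e) (G e))) \<longlongrightarrow> mat_vec A0 y) F"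
    by (intro tendsto_intros A y)
  then have "((\<lambda>e. vscale (l e * c e) (mat_vec (A e) (G e))) \<longlongrightarrow> mat_vec A0 y) F"
    by (simp add: mat_vec_msmul mat_vec_vscale mult.commute)
  moreover have "\<forall>\<^sub>F e in F. l e * c e \<noteq> 0"
    using A(2) y(2) by eventually_elim simp
  ultimately have "proj_tendsto (\<lambda>e. mat_vec (A e) (G e)) (vproj (mat_vec A0 y)) F"
    using mat_vec_nonzero[OF A0 y(3)] by (rule proj_tendstoI)
  then show ?thesis
    using mob_app_vproj[OF y(3)] y(4) by simp
qed

definition sphere_of_vec :: "vec \<Rightarrow> real \<times> real \<times> real" where
  "sphere_of_vec v =
    (let n = (cmod (fst v))\<^sup>2 + (cmod (snd v))\<^sup>2
     in (2 * Re (fst v * cnj (snd v)) / n, 2 * Im (fst v * cnj (snd v)) / n,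
         ((cmod (fst v))\<^sup>2 - (cmod (snd v))\<^sup>2) / n))"

lemma to_sphere_vproj:
  assumes "v \<noteq> 0"
  shows "to_sphere (vproj v) = sphere_of_vec v"
proof -
  obtain u w where v: "v = (u, w)" by (cases v)
  show ?thesis
  proof (cases "w = 0")
    case True
    with assms v show ?thesis
      by (simp add: vproj_def to_sphere_def sphere_of_vec_def zero_prod_def)
  next
    case False
    define n where "n = (cmod w)\<^sup>2"
    have n: "n > 0"
      using False by (simp add: n_def)
    have quot: "u / w = u * cnj w / complex_of_real n"
      using complex_div_cnj[of u w] by (simp add: n_def)
    have "1 + (cmod (u / w))\<^sup>2 = ((cmod u)\<^sup>2 + n) / n" "(cmod (u / w))\<^sup>2 - 1 = ((cmod u)\<^sup>2 - n) / n"
      using n by (simp_all add: norm_divide power_divide n_def field_simps)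
    moreover have "Re (u / w) = Re (u * cnj w) / n" "Im (u / w) = Im (u * cnj w) / n"
      unfolding quot by (simp_all add: Re_divide_of_real Im_divide_of_real)
    ultimately show ?thesis
      using False n by (simp add: v vproj_def to_sphere_def sphere_of_vec_def Let_def n_def[symmetric]
          add.commute)
  qed
qed

lemma tendsto_sphere_of_vec:
  assumes "(v \<longlongrightarrow> v0) F" "v0 \<noteq> 0"
  shows "((\<lambda>e. sphere_of_vec (v e)) \<longlongrightarrow> sphere_of_vec v0) F"
proof -
  have "(cmod (fst v0))\<^sup>2 + (cmod (snd v0))\<^sup>2 \<noteq> 0"
    using assms(2) by (cases v0) (auto simp: add_nonneg_eq_0_iff zero_prod_def)
  then show ?thesis
    unfolding sphere_of_vec_def Let_def by (intro tendsto_intros assms(1)) auto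
qed

lemma proj_tendsto_imp_sconv:
  assumes "proj_tendsto G q F"
  shows "sconv (\<lambda>e. vproj (G e)) q F"
proof -
  obtain c y where y: "((\<lambda>e. vscale (c e) (G e)) \<longlongrightarrow> y) F" "\<forall>\<^sub>F e in F. c e \<noteq> 0"
    "y \<noteq> 0" "vproj y = q"
    using assms by (rule proj_tendstoE)
  have "\<forall>\<^sub>F e in F. vscale (c e) (G e) \<noteq> 0"
    using tendsto_imp_eventually_ne[OF y(1,3)] .
  with y(2) have "\<forall>\<^sub>F e in F. sphere_of_vec (vscale (c e) (G e)) = to_sphere (vproj (G e))"
    by eventually_elim (metis to_sphere_vproj vproj_vscale)
  with tendsto_sphere_of_vec[OF y(1,3)] have "((\<lambda>e. to_sphere (vproj (G e))) \<longlongrightarrow> sphere_of_vec y) F"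
    by (simp add: tendsto_cong)
  then show ?thesis
    unfolding sconv_def using to_sphere_vproj[OF y(3)] y(4) by simp
qed

definition stereo_north :: "real \<times> real \<times> real \<Rightarrow> complex" where
  "stereo_north t = Complex (fst t) (fst (snd t)) / complex_of_real (1 - snd (snd t))"

definition stereo_south :: "real \<times> real \<times> real \<Rightarrow> complex" where
  "stereo_south t = Complex (fst t) (- fst (snd t)) / complex_of_real (1 + snd (snd t))"

lemma to_sphere_Some:
  "to_sphere (Some w) = (2 * Re w / (1 + (cmod w)\<^sup>2), 2 * Im w / (1 + (cmod w)\<^sup>2),
     ((cmod w)\<^sup>2 - 1) / ((cmod w)\<^sup>2 + 1))"
  by (simp add: to_sphere_def)

lemma stereo_north_to_sphere: "stereo_north (to_sphere (Some w)) = w"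
proof -
  define n where "n = (cmod w)\<^sup>2"
  have "n \<ge> 0"
    by (simp add: n_def)
  moreover have "Complex (2 * Re w / (1 + n)) (2 * Im w / (1 + n)) = complex_of_real (2 / (1 + n)) * w"
    by (simp add: complex_eq_iff)
  moreover have "1 - (n - 1) / (n + 1) = 2 / (1 + n)"
    using \<open>n \<ge> 0\<close> by (simp add: field_simps)
  moreover have "1 + complex_of_real n \<noteq> 0"
    using \<open>n \<ge> 0\<close> by (simp add: complex_eq_iff)
  ultimately show ?thesis
    by (simp add: stereo_north_def to_sphere_Some n_def[symmetric])
qed

lemma stereo_south_to_sphere:
  assumes "w \<noteq> 0"
  shows "stereo_south (to_sphere (Some w)) = 1 / w"
proof -
  define n where "n = (cmod w)\<^sup>2"
  have n: "n > 0"
    using assms by (simp add: n_def)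
  have "Complex (2 * Re w / (1 + n)) (- (2 * Im w / (1 + n))) = complex_of_real (2 / (1 + n)) * cnj w"
    by (simp add: complex_eq_iff)
  moreover have "1 / w = cnj w / complex_of_real n"
    using complex_div_cnj[of 1 w] by (simp add: n_def)
  moreover have "1 + (n - 1) / (n + 1) = (2 / (1 + n)) * n"
    using n by (simp add: field_simps)
  moreover have "1 + complex_of_real n \<noteq> 0"
    using n by (simp add: complex_eq_iff)
  ultimately show ?thesis
    using n by (simp add: stereo_south_def to_sphere_Some n_def[symmetric])
qed

lemma to_sphere_height_lt_1: "snd (snd (to_sphere (Some w))) < 1"
  using add_nonneg_pos[of "(cmod w)\<^sup>2" 1] by (simp add: to_sphere_def divide_less_eq)

lemma sconv_Some_imp_vec_tendsto:
  assumes "sconv f (Some l) F"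
  shows "((\<lambda>e. (stereo_north (to_sphere (f e)), 1)) \<longlongrightarrow> (l, 1)) F"
    and "\<forall>\<^sub>F e in F. vproj (stereo_north (to_sphere (f e)), 1) = f e"
proof -
  have T: "((\<lambda>e. to_sphere (f e)) \<longlongrightarrow> to_sphere (Some l)) F"
    using assms by (simp add: sconv_def)
  have "((\<lambda>e. stereo_north (to_sphere (f e))) \<longlongrightarrow> stereo_north (to_sphere (Some l))) F"
    using to_sphere_height_lt_1[of l] unfolding stereo_north_def by (intro tendsto_intros T) auto
  then show "((\<lambda>e. (stereo_north (to_sphere (f e)), 1)) \<longlongrightarrow> (l, 1)) F"
    by (intro tendsto_intros) (simp add: stereo_north_to_sphere)
  have "((\<lambda>e. snd (snd (to_sphere (f e)))) \<longlongrightarrow> snd (snd (to_sphere (Some l)))) F"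
    by (intro tendsto_intros T)
  then have "\<forall>\<^sub>F e in F. snd (snd (to_sphere (f e))) < 1"
    using to_sphere_height_lt_1 by (rule order_tendstoD(2))
  then show "\<forall>\<^sub>F e in F. vproj (stereo_north (to_sphere (f e)), 1) = f e"
  proof eventually_elim
    case (elim e)
    then obtain v where "f e = Some v"
      by (cases "f e") (simp_all add: to_sphere_def)
    then show ?case
      by (simp add: stereo_north_to_sphere vproj_def)
  qed
qed

lemma sconv_None_imp_vec_tendsto:
  assumes "sconv f None F"
  shows "((\<lambda>e. (1, stereo_south (to_sphere (f e)))) \<longlongrightarrow> (1, 0)) F"
    and "\<forall>\<^sub>F e in F. vproj (1, stereo_south (to_sphere (f e))) = f e"
proof -
  have T: "((\<lambda>e. to_sphere (f e)) \<longlongrightarrow> to_sphere None) F"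
    using assms by (simp add: sconv_def)
  have "((\<lambda>e. stereo_south (to_sphere (f e))) \<longlongrightarrow> stereo_south (to_sphere None)) F"
    unfolding stereo_south_def by (intro tendsto_intros T) (simp add: to_sphere_def)
  moreover have "stereo_south (to_sphere None) = 0"
    by (simp add: stereo_south_def to_sphere_def complex_eq_iff)
  ultimately show "((\<lambda>e. (1, stereo_south (to_sphere (f e)))) \<longlongrightarrow> (1, 0)) F"
    by (intro tendsto_intros) auto
  have "((\<lambda>e. snd (snd (to_sphere (f e)))) \<longlongrightarrow> snd (snd (to_sphere None))) F"
    by (intro tendsto_intros T)
  then have "\<forall>\<^sub>F e in F. snd (snd (to_sphere (f e))) > -1"
    by (rule order_tendstoD(1)) (simp add: to_sphere_def)
  then show "\<forall>\<^sub>F e in F. vproj (1, stereo_south (to_sphere (f e))) = f e"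
  proof eventually_elim
    case (elim e)
    show ?case
    proof (cases "f e")
      case None
      then show ?thesis
        by (simp add: stereo_south_def to_sphere_def vproj_def complex_eq_iff)
    next
      case (Some v)
      with elim have "v \<noteq> 0"
        by (auto simp: to_sphere_def)
      with Some show ?thesis
        by (simp add: stereo_south_to_sphere vproj_def)
    qed
  qed
qed

lemma sconv_imp_vec_tendsto:
  assumes "sconv f L F"
  obtains G y where "(G \<longlongrightarrow> y) F" "y \<noteq> 0" "vproj y = L"
    "\<forall>\<^sub>F e in F. G e \<noteq> 0 \<and> vproj (G e) = f e"
proof (cases L)
  case None
  with assms sconv_None_imp_vec_tendsto[of f F] show thesis
    by (intro that) (auto simp: vproj_def zero_prod_def elim: eventually_mono)
next
  case (Some l)
  with assms sconv_Some_imp_vec_tendsto[of f l F] show thesis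
    by (intro that) (auto simp: vproj_def zero_prod_def elim: eventually_mono)
qed

section \<open>Hyperbolic letters\<close>

lemma deriv_linear_fractional:
  assumes "c * z + d \<noteq> 0"
  shows "deriv (\<lambda>w. (a * w + b) / (c * w + d)) z = (a * d - b * c) / (c * z + d)\<^sup>2"
  by (rule DERIV_imp_deriv)
    (use assms in \<open>auto intro!: derivative_eq_intros simp: power2_eq_square field_simps\<close>)

lemma hom_coords_eigenvector:
  assumes A: "mdet A \<noteq> 0" and fixed: "is_fixed A z"
  obtains l where "l \<noteq> 0" "mat_vec A (hom_coords z) = vscale l (hom_coords z)"
    "multiplier A z = mdet A / l\<^sup>2"
proof -
  obtain a b c d where A_eq: "A = (a, b, c, d)" by (cases A)
  show thesis
  proof (cases z)
    case None
    with fixed A_eq have "c = 0"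
      by (auto simp: is_fixed_def mob_app_def split: if_splits)
    with A A_eq have "a \<noteq> 0"
      by (simp add: mdet_def)
    have "deriv (\<lambda>t. (c + d * t) / (a + b * t)) 0 = (a * d - b * c) / a\<^sup>2"
      using deriv_linear_fractional[of b 0 a d c] \<open>a \<noteq> 0\<close> by (simp add: algebra_simps)
    with \<open>a \<noteq> 0\<close> \<open>c = 0\<close> None show thesis
      by (intro that[of a]) (simp_all add: A_eq hom_coords_def multiplier_def mdet_def)
  next
    case (Some q)
    with fixed A_eq have fix_q: "c * q + d \<noteq> 0" "a * q + b = (c * q + d) * q"
      by (auto simp: is_fixed_def mob_app_def field_simps split: if_splits)
    moreover have "multiplier A z = (a * d - b * c) / (c * q + d)\<^sup>2"
      using deriv_linear_fractional[OF fix_q(1)] by (simp add: A_eq Some multiplier_def)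
    ultimately show thesis
      by (intro that[of "c * q + d"]) (simp_all add: A_eq Some hom_coords_def mdet_def)
  qed
qed

lemma vscale_hom_coords_vproj:
  assumes "v \<noteq> 0"
  obtains c where "c \<noteq> 0" "v = vscale c (hom_coords (vproj v))"
proof (cases "snd v = 0")
  case True
  with assms show thesis
    by (intro that[of "fst v"]) (auto simp: vproj_def hom_coords_def zero_prod_def prod_eq_iff)
next
  case False
  then show thesis
    by (intro that[of "snd v"]) (auto simp: vproj_def hom_coords_def prod_eq_iff)
qed

lemma fixed_point_eigenvector:
  assumes "mdet A \<noteq> 0" "is_fixed A z" "v \<noteq> 0" "vproj v = z"
  obtains l where "l \<noteq> 0" "mat_vec A v = vscale l v" "multiplier A z = mdet A / l\<^sup>2"
proof -
  obtain l where l: "l \<noteq> 0" "mat_vec A (hom_coords z) = vscale l (hom_coords z)"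
    "multiplier A z = mdet A / l\<^sup>2"
    using hom_coords_eigenvector[OF assms(1,2)] .
  obtain c where "v = vscale c (hom_coords z)"
    using vscale_hom_coords_vproj[OF assms(3)] assms(4) by metis
  with l show thesis
    by (intro that[of l]) (simp_all add: mat_vec_vscale mult.commute)
qed

lemma eventually_fixed_point_eigenvalue:
  assumes "\<forall>\<^sub>F e in F. mdet (N e) \<noteq> 0 \<and> is_fixed (N e) (z e) \<and> v e \<noteq> 0 \<and> vproj (v e) = z e"
  obtains l where "\<forall>\<^sub>F e in F. l e \<noteq> 0 \<and> mat_vec (N e) (v e) = vscale (l e) (v e) \<and>
    multiplier (N e) (z e) = mdet (N e) / (l e)\<^sup>2"
proof -
  have "\<exists>l. \<forall>e. mdet (N e) \<noteq> 0 \<and> is_fixed (N e) (z e) \<and> v e \<noteq> 0 \<and> vproj (v e) = z e \<longrightarrow>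
      l e \<noteq> 0 \<and> mat_vec (N e) (v e) = vscale (l e) (v e) \<and> multiplier (N e) (z e) = mdet (N e) / (l e)\<^sup>2"
    by (rule choice) (metis fixed_point_eigenvector)
  then obtain l where "\<forall>e. mdet (N e) \<noteq> 0 \<and> is_fixed (N e) (z e) \<and> v e \<noteq> 0 \<and> vproj (v e) = z e \<longrightarrow>
      l e \<noteq> 0 \<and> mat_vec (N e) (v e) = vscale (l e) (v e) \<and> multiplier (N e) (z e) = mdet (N e) / (l e)\<^sup>2"
    by blast
  with assms show thesis
    by (intro that[of l]) (auto elim: eventually_mono)
qed

lemma eigenvalue_product:
  assumes "mat_vec A a = vscale la a" "mat_vec A r = vscale lr r" "vdet a r \<noteq> 0"
  shows "la * lr = mdet A"
  using vdet_mat_vec[of A a r] assms by (simp add: vdet_vscale)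

lemma eigenvector_minv:
  assumes "mdet A \<noteq> 0" "l \<noteq> 0" "mat_vec A v = vscale l v"
  shows "mat_vec (minv A) v = vscale (mdet A / l) v"
proof (rule vscale_cancel[OF assms(2)])
  have "vscale l (mat_vec (minv A) v) = mat_vec (minv A) (mat_vec A v)"
    using assms(3) by (simp add: mat_vec_vscale)
  then show "vscale l (mat_vec (minv A) v) = vscale l (vscale (mdet A / l) v)"
    using assms(2) by (simp add: mat_vec_minv)
qed

lemma eigenbasis_expansion:
  assumes "mat_vec L a = vscale la a" "mat_vec L r = vscale lr r" "la \<noteq> 0" "vdet a r \<noteq> 0"
  shows "vscale (1 / la) (mat_vec L g) =
    vscale (vdet g r / vdet a r) a + vscale (vdet a g / vdet a r * (lr / la)) r"
proof -
  have "mat_vec L g = mat_vec L (vscale (vdet g r / vdet a r) a + vscale (vdet a g / vdet a r) r)"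
    using vec_decomp[OF assms(4)] by metis
  with assms(1-3) show ?thesis
    by (simp add: mat_vec_add mat_vec_vscale vscale_add algebra_simps)
qed

text \<open>After division by \<open>la\<close> the \<open>r\<close>-component of the expansion in the eigenbasis dies out.\<close>
lemma proj_tendsto_contraction:
  assumes eig: "\<forall>\<^sub>F e in F. mat_vec (L e) (a e) = vscale (la e) (a e) \<and>
      mat_vec (L e) (r e) = vscale (lr e) (r e) \<and> la e \<noteq> 0"
    and a: "(a \<longlongrightarrow> a0) F" and r: "(r \<longlongrightarrow> r0) F" and indep: "vdet a0 r0 \<noteq> 0"
    and ratio: "((\<lambda>e. lr e / la e) \<longlongrightarrow> 0) F"
    and G: "proj_tendsto G q F" and q: "q \<noteq> vproj r0"
  shows "proj_tendsto (\<lambda>e. mat_vec (L e) (G e)) (vproj a0) F"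
proof -
  obtain c y where y: "((\<lambda>e. vscale (c e) (G e)) \<longlongrightarrow> y) F" "\<forall>\<^sub>F e in F. c e \<noteq> 0"
    "y \<noteq> 0" "vproj y = q"
    using G by (rule proj_tendstoE)
  define g where "g e = vscale (c e) (G e)" for e
  have "a0 \<noteq> 0" "r0 \<noteq> 0"
    using vdet_nonzero_imp_nonzero[OF indep] by auto
  with y q have "vdet y r0 \<noteq> 0"
    using vproj_eq_iff by blast
  have "\<forall>\<^sub>F e in F. vdet (a e) (r e) \<noteq> 0"
    using tendsto_imp_eventually_ne[OF tendsto_vdet[OF a r] indep] .
  with eig have "\<forall>\<^sub>F e in F. vscale (c e / la e) (mat_vec (L e) (G e)) =
      vscale (vdet (g e) (r e) / vdet (a e) (r e)) (a e) +
      vscale (vdet (a e) (g e) / vdet (a e) (r e) * (lr e / la e)) (r e)"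
  proof eventually_elim
    case (elim e)
    have "vscale (c e / la e) (mat_vec (L e) (G e)) = vscale (1 / la e) (mat_vec (L e) (g e))"
      by (simp add: g_def mat_vec_vscale mult.commute)
    with elim show ?case
      using eigenbasis_expansion[of "L e" "a e" "la e" "r e" "lr e" "g e"] by simp
  qed
  moreover have "((\<lambda>e. vscale (vdet (g e) (r e) / vdet (a e) (r e)) (a e) +
      vscale (vdet (a e) (g e) / vdet (a e) (r e) * (lr e / la e)) (r e)) \<longlongrightarrow>
      vscale (vdet y r0 / vdet a0 r0) a0 + vscale (vdet a0 y / vdet a0 r0 * 0) r0) F"
    unfolding g_def by (intro tendsto_intros a r y(1) ratio indep)
  ultimately have "((\<lambda>e. vscale (c e / la e) (mat_vec (L e) (G e))) \<longlongrightarrow>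
      vscale (vdet y r0 / vdet a0 r0) a0) F"
    by (simp add: tendsto_cong)
  moreover have "\<forall>\<^sub>F e in F. c e / la e \<noteq> 0"
    using eig y(2) by eventually_elim simp
  ultimately have "proj_tendsto (\<lambda>e. mat_vec (L e) (G e)) (vproj (vscale (vdet y r0 / vdet a0 r0) a0)) F"
    by (rule proj_tendstoI) (simp add: \<open>vdet y r0 \<noteq> 0\<close> indep \<open>a0 \<noteq> 0\<close>)
  then show ?thesis
    using \<open>vdet y r0 \<noteq> 0\<close> indep by (simp add: vproj_vscale)
qed

lemma fixed_points_eigenbasis:
  fixes N :: "'b \<Rightarrow> mat" and pa pr :: "'b \<Rightarrow> ecomplex"
  assumes fp: "\<forall>\<^sub>F e in F. mdet (N e) \<noteq> 0 \<and> is_fixed (N e) (pa e) \<and> is_fixed (N e) (pr e)"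
    and pa: "sconv pa qa F" and pr: "sconv pr qr F" and "qa \<noteq> qr"
  obtains A R ya yr la lr where "(A \<longlongrightarrow> ya) F" "(R \<longlongrightarrow> yr) F" "vproj ya = qa" "vproj yr = qr"
    "vdet ya yr \<noteq> 0"
    "\<forall>\<^sub>F e in F. mat_vec (N e) (A e) = vscale (la e) (A e) \<and>
      mat_vec (N e) (R e) = vscale (lr e) (R e) \<and> la e \<noteq> 0 \<and>
      mat_vec (minv (N e)) (R e) = vscale (la e) (R e) \<and>
      mat_vec (minv (N e)) (A e) = vscale (lr e) (A e) \<and> lr e / la e = multiplier (N e) (pa e)"
proof -
  obtain A ya where A: "(A \<longlongrightarrow> ya) F" "ya \<noteq> 0" "vproj ya = qa"
    "\<forall>\<^sub>F e in F. A e \<noteq> 0 \<and> vproj (A e) = pa e"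
    using pa by (rule sconv_imp_vec_tendsto)
  obtain R yr where R: "(R \<longlongrightarrow> yr) F" "yr \<noteq> 0" "vproj yr = qr"
    "\<forall>\<^sub>F e in F. R e \<noteq> 0 \<and> vproj (R e) = pr e"
    using pr by (rule sconv_imp_vec_tendsto)
  have indep: "vdet ya yr \<noteq> 0"
    using vproj_eq_iff[OF A(2) R(2)] A(3) R(3) \<open>qa \<noteq> qr\<close> by simp
  have "\<forall>\<^sub>F e in F. mdet (N e) \<noteq> 0 \<and> is_fixed (N e) (pa e) \<and> A e \<noteq> 0 \<and> vproj (A e) = pa e"
    using fp A(4) by eventually_elim simp
  then obtain la where la: "\<forall>\<^sub>F e in F. la e \<noteq> 0 \<and> mat_vec (N e) (A e) = vscale (la e) (A e) \<and>
      multiplier (N e) (pa e) = mdet (N e) / (la e)\<^sup>2"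
    by (rule eventually_fixed_point_eigenvalue)
  have "\<forall>\<^sub>F e in F. mdet (N e) \<noteq> 0 \<and> is_fixed (N e) (pr e) \<and> R e \<noteq> 0 \<and> vproj (R e) = pr e"
    using fp R(4) by eventually_elim simp
  then obtain lr where lr: "\<forall>\<^sub>F e in F. lr e \<noteq> 0 \<and> mat_vec (N e) (R e) = vscale (lr e) (R e) \<and>
      multiplier (N e) (pr e) = mdet (N e) / (lr e)\<^sup>2"
    by (rule eventually_fixed_point_eigenvalue)
  have "\<forall>\<^sub>F e in F. mat_vec (N e) (A e) = vscale (la e) (A e) \<and>
      mat_vec (N e) (R e) = vscale (lr e) (R e) \<and> la e \<noteq> 0 \<and>
      mat_vec (minv (N e)) (R e) = vscale (la e) (R e) \<and>
      mat_vec (minv (N e)) (A e) = vscale (lr e) (A e) \<and> lr e / la e = multiplier (N e) (pa e)"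
    using fp la lr tendsto_imp_eventually_ne[OF tendsto_vdet[OF A(1) R(1)] indep]
  proof eventually_elim
    case (elim e)
    then have det: "mdet (N e) = la e * lr e"
      by (intro eigenvalue_product[symmetric]) auto
    with elim have "lr e / la e = multiplier (N e) (pa e)"
      by (simp add: power2_eq_square)
    with elim det show ?case
      using eigenvector_minv[of "N e" "lr e" "R e"] eigenvector_minv[of "N e" "la e" "A e"] by simp
  qed
  from that[OF A(1) R(1) A(3) R(3) indep this] show thesis .
qed

lemma proj_tendsto_hyperbolic:
  fixes N :: "'b \<Rightarrow> mat" and pa pr :: "'b \<Rightarrow> ecomplex"
  assumes fp: "\<forall>\<^sub>F e in F. mdet (N e) \<noteq> 0 \<and> is_fixed (N e) (pa e) \<and> is_fixed (N e) (pr e)"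
    and pa: "sconv pa qa F" and pr: "sconv pr qr F" and "qa \<noteq> qr"
    and mu: "((\<lambda>e. multiplier (N e) (pa e)) \<longlongrightarrow> 0) F"
    and G: "proj_tendsto G q F"
  shows "q \<noteq> qr \<Longrightarrow> proj_tendsto (\<lambda>e. mat_vec (N e) (G e)) qa F"
    and "q \<noteq> qa \<Longrightarrow> proj_tendsto (\<lambda>e. mat_vec (minv (N e)) (G e)) qr F"
proof -
  obtain A R ya yr la lr where A: "(A \<longlongrightarrow> ya) F" "vproj ya = qa" and R: "(R \<longlongrightarrow> yr) F" "vproj yr = qr"
    and indep: "vdet ya yr \<noteq> 0"
    and eig: "\<forall>\<^sub>F e in F. mat_vec (N e) (A e) = vscale (la e) (A e) \<and>
      mat_vec (N e) (R e) = vscale (lr e) (R e) \<and> la e \<noteq> 0 \<and>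
      mat_vec (minv (N e)) (R e) = vscale (la e) (R e) \<and>
      mat_vec (minv (N e)) (A e) = vscale (lr e) (A e) \<and> lr e / la e = multiplier (N e) (pa e)"
    by (rule fixed_points_eigenbasis[OF fp pa pr \<open>qa \<noteq> qr\<close>])
  have "\<forall>\<^sub>F e in F. lr e / la e = multiplier (N e) (pa e)"
    using eig by (rule eventually_mono) simp
  from tendsto_cong[OF this] mu have ratio: "((\<lambda>e. lr e / la e) \<longlongrightarrow> 0) F"
    by simp
  have "\<forall>\<^sub>F e in F. mat_vec (N e) (A e) = vscale (la e) (A e) \<and>
      mat_vec (N e) (R e) = vscale (lr e) (R e) \<and> la e \<noteq> 0"
    using eig by (rule eventually_mono) simp
  then show "q \<noteq> qr \<Longrightarrow> proj_tendsto (\<lambda>e. mat_vec (N e) (G e)) qa F"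
    using proj_tendsto_contraction[OF _ A(1) R(1) indep ratio G] A(2) R(2) by simp
  have "\<forall>\<^sub>F e in F. mat_vec (minv (N e)) (R e) = vscale (la e) (R e) \<and>
      mat_vec (minv (N e)) (A e) = vscale (lr e) (A e) \<and> la e \<noteq> 0"
    using eig by (rule eventually_mono) simp
  moreover have "vdet yr ya \<noteq> 0"
    using indep vdet_swap[of yr ya] by simp
  ultimately show "q \<noteq> qa \<Longrightarrow> proj_tendsto (\<lambda>e. mat_vec (minv (N e)) (G e)) qr F"
    using proj_tendsto_contraction[OF _ R(1) A(1) _ ratio G] A(2) R(2) by simp
qed

section \<open>Reduced words\<close>

definition letters :: "(nat \<times> int) set" where
  "letters = {0, 1} \<times> {1, -1}"

definition attractor :: "(nat \<Rightarrow> nat \<Rightarrow> ecomplex) \<Rightarrow> nat \<times> int \<Rightarrow> ecomplex" where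
  "attractor p l = (case l of (j, s) \<Rightarrow>
     (if j = 0 then (if s = 1 then p 0 1 else p 0 2) else (if s = 1 then p 1 2 else p 1 1)))"

definition repeller :: "(nat \<Rightarrow> nat \<Rightarrow> ecomplex) \<Rightarrow> nat \<times> int \<Rightarrow> ecomplex" where
  "repeller p l = (case l of (j, s) \<Rightarrow>
     (if j = 0 then (if s = 1 then p 0 2 else p 0 1) else (if s = 1 then p 1 1 else p 1 2)))"

definition inverse_letters :: "nat \<times> int \<Rightarrow> nat \<times> int \<Rightarrow> bool" where
  "inverse_letters a b \<longleftrightarrow> fst a = fst b \<and> snd a = - snd b"

abbreviation no_cancellation :: "(nat \<times> int) list \<Rightarrow> bool" where
  "no_cancellation r \<equiv> successively (\<lambda>a b. \<not> inverse_letters a b) r"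

text \<open>Below, a word is a list whose head is its leftmost letter (the one applied last), the
  reverse of the order used by \<open>word_mat\<close>; so \<open>is_block a b\<close> says that \<open>a b\<close> is
  \<open>m\<^sub>0 m\<^sub>1\<close> or \<open>(m\<^sub>0 m\<^sub>1)\<^sup>-\<^sup>1\<close>.\<close>
definition is_block :: "nat \<times> int \<Rightarrow> nat \<times> int \<Rightarrow> bool" where
  "is_block a b \<longleftrightarrow> (a, b) = ((0, 1), (1, 1)) \<or> (a, b) = ((1, -1), (0, -1))"

fun split_blocks :: "(nat \<times> int) list \<Rightarrow> int \<times> (nat \<times> int) list" where
  "split_blocks (a # b # r) =
     (if (a, b) = ((0, 1), (1, 1)) then (case split_blocks r of (k, r') \<Rightarrow> (k + 1, r'))
      else if (a, b) = ((1, -1), (0, -1)) then (case split_blocks r of (k, r') \<Rightarrow> (k - 1, r'))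
      else (0, a # b # r))"
| "split_blocks r = (0, r)"

lemma split_blocks_suffix:
  "split_blocks r = (k, r') \<Longrightarrow> \<exists>u. r = u @ r' \<and> 2 * \<bar>k\<bar> \<le> int (length u)"
proof (induction r arbitrary: k r' rule: split_blocks.induct)
  case (1 a b r)
  obtain k0 r0 where r: "split_blocks r = (k0, r0)"
    by fastforce
  show ?case
  proof (cases "(a, b) = ((0, 1), (1, 1)) \<or> (a, b) = ((1, -1), (0, -1))")
    case True
    with "1.prems" r have "r' = r0" "\<bar>k\<bar> \<le> \<bar>k0\<bar> + 1"
      by (auto split: if_splits)
    moreover obtain u where "r = u @ r0" "2 * \<bar>k0\<bar> \<le> int (length u)"
      using "1.IH" r True by (auto split: if_splits)
    ultimately show ?thesis
      by (intro exI[of _ "a # b # u"]) auto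
  next
    case False
    with "1.prems" show ?thesis
      by auto
  qed
qed auto

lemma split_blocks_no_block: "split_blocks r = (k, l # l' # r') \<Longrightarrow> \<not> is_block l l'"
  by (induction r arbitrary: k rule: split_blocks.induct)
    (auto simp: is_block_def split: if_splits prod.splits)

lemma split_blocks_non_block:
  "r = [] \<or> \<not> is_block l (hd r) \<Longrightarrow> split_blocks (l # r) = (0, l # r)"
  by (cases r) (auto simp: is_block_def)

text \<open>In a word without cancellations positive and negative blocks cannot meet.\<close>
lemma split_blocks_sign:
  assumes "no_cancellation r" "split_blocks r = (k, r')"
  shows "(k = 0 \<longrightarrow> r' = r) \<and>
    (0 < k \<longrightarrow> hd r = (0, 1) \<and> (r' \<noteq> [] \<longrightarrow> hd r' \<noteq> (1, -1))) \<and>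
    (k < 0 \<longrightarrow> hd r = (1, -1) \<and> (r' \<noteq> [] \<longrightarrow> hd r' \<noteq> (0, 1)))"
  using assms
proof (induction r arbitrary: k r' rule: split_blocks.induct)
  case (1 a b r)
  obtain k0 r0 where r: "split_blocks r = (k0, r0)"
    by fastforce
  have "no_cancellation r" and b_r: "r \<noteq> [] \<Longrightarrow> \<not> inverse_letters b (hd r)"
    using "1.prems"(1) by (auto simp: successively_Cons)
  have r_nonempty: "k0 \<noteq> 0 \<Longrightarrow> r \<noteq> []"
    using split_blocks_suffix[OF r] by auto
  show ?case
  proof (cases "(a, b) = ((0, 1), (1, 1))")
    case True
    note IH = "1.IH"(1)[OF True \<open>no_cancellation r\<close> r]
    from True "1.prems"(2) r have "k = k0 + 1" "r' = r0"
      by auto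
    moreover have "k0 \<ge> 0"
      using IH b_r r_nonempty True by (force simp: inverse_letters_def)
    moreover have "r' \<noteq> [] \<Longrightarrow> hd r' \<noteq> (1, -1)"
      using IH b_r True \<open>r' = r0\<close> \<open>k0 \<ge> 0\<close> by (cases "k0 = 0") (auto simp: inverse_letters_def)
    ultimately show ?thesis
      using True by simp
  next
    case not_pos: False
    show ?thesis
    proof (cases "(a, b) = ((1, -1), (0, -1))")
      case True
      note IH = "1.IH"(2)[OF not_pos True \<open>no_cancellation r\<close> r]
      from True not_pos "1.prems"(2) r have "k = k0 - 1" "r' = r0"
        by auto
      moreover have "k0 \<le> 0"
        using IH b_r r_nonempty True by (force simp: inverse_letters_def)
      moreover have "r' \<noteq> [] \<Longrightarrow> hd r' \<noteq> (0, 1)"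
        using IH b_r True \<open>r' = r0\<close> \<open>k0 \<le> 0\<close> by (cases "k0 = 0") (auto simp: inverse_letters_def)
      ultimately show ?thesis
        using True by simp
    next
      case False
      with not_pos "1.prems"(2) show ?thesis
        by auto
    qed
  qed
qed auto

lemma is_word_letters: "is_word w \<Longrightarrow> set w \<subseteq> letters"
  by (auto simp: is_word_def letters_def)

lemma is_word_no_cancellation: "is_word w \<Longrightarrow> no_cancellation (rev w)"
  unfolding successively_rev by (auto simp: is_word_def successively_conv_nth inverse_letters_def)

lemma word_mat_snoc: "word_mat A B (w @ [l]) = mmul (letter A B l) (word_mat A B w)"
  by (simp add: word_mat_def)

locale word_limit =
  fixes p :: "nat \<Rightarrow> nat \<Rightarrow> ecomplex" and M :: mat and x :: ecomplex and n :: nat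
    and M0 M1 :: "'b \<Rightarrow> mat" and F :: "'b filter"
  assumes p_eq: "p 0 2 = p 1 2"
    and p_dist: "p 0 2 \<noteq> p 0 1" "p 0 2 \<noteq> p 1 1" "p 0 1 \<noteq> p 1 1"
    and M_det: "mdet M \<noteq> 0"
    and M_orbit: "\<And>k i j l s. k \<noteq> 0 \<Longrightarrow> i \<in> {0, 1} \<Longrightarrow> j \<in> {1, 2} \<Longrightarrow>
      l \<in> {0, 1} \<Longrightarrow> s \<in> {1, 2} \<Longrightarrow> (l, s) \<noteq> (i, j) \<Longrightarrow> mob_app (mpow M k) (p i j) \<noteq> p l s"
    and x_orbit: "\<And>s i j. - int n \<le> s \<Longrightarrow> s \<le> int n \<Longrightarrow> i \<in> {0, 1} \<Longrightarrow> j \<in> {1, 2} \<Longrightarrow>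
      mob_app (mpow M s) x \<noteq> p i j"
    and letter_limit: "\<And>l G q. l \<in> letters \<Longrightarrow> proj_tendsto G q F \<Longrightarrow> q \<noteq> repeller p l \<Longrightarrow>
      proj_tendsto (\<lambda>e. mat_vec (letter (M0 e) (M1 e) l) (G e)) (attractor p l) F"
    and block_limit: "\<And>G q. proj_tendsto G q F \<Longrightarrow>
      proj_tendsto (\<lambda>e. mat_vec (mmul (M0 e) (M1 e)) (G e)) (mob_app M q) F"
    and block_inv_limit: "\<And>G q. proj_tendsto G q F \<Longrightarrow>
      proj_tendsto (\<lambda>e. mat_vec (minv (mmul (M0 e) (M1 e))) (G e)) (mob_app (minv M) q) F"
begin

definition word_vec :: "(nat \<times> int) list \<Rightarrow> 'b \<Rightarrow> vec" where
  "word_vec r e = mat_vec (word_mat (M0 e) (M1 e) (rev r)) (hom_coords x)"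

lemma word_vec_Nil: "word_vec [] = (\<lambda>e. hom_coords x)"
  by (simp add: word_vec_def word_mat_def fun_eq_iff)

lemma word_vec_Cons: "word_vec (l # r) = (\<lambda>e. mat_vec (letter (M0 e) (M1 e) l) (word_vec r e))"
  by (simp add: word_vec_def word_mat_snoc mat_vec_mmul fun_eq_iff)

definition limit_point :: "(nat \<times> int) list \<Rightarrow> ecomplex" where
  "limit_point r = (case split_blocks r of (k, r') \<Rightarrow>
     mob_app (mpow M k) (case r' of [] \<Rightarrow> x | l # _ \<Rightarrow> attractor p l))"

lemma word_vec_blocks:
  "split_blocks r = (k, r') \<Longrightarrow> proj_tendsto (word_vec r') q F \<Longrightarrow>
    proj_tendsto (word_vec r) (mob_app (mpow M k) q) F"
proof (induction r arbitrary: k r' rule: split_blocks.induct)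
  case (1 a b r)
  obtain k0 r0 where r: "split_blocks r = (k0, r0)"
    by fastforce
  show ?case
  proof (cases "(a, b) = ((0, 1), (1, 1))")
    case True
    with "1.prems" r have "k = k0 + 1" "r' = r0"
      by auto
    with "1.IH"(1)[OF True r] "1.prems"(2) True show ?thesis
      using block_limit by (simp add: word_vec_Cons letter_def mat_vec_mmul mob_app_mpow_add1[OF M_det])
  next
    case not_pos: False
    show ?thesis
    proof (cases "(a, b) = ((1, -1), (0, -1))")
      case True
      with not_pos "1.prems" r have "k = k0 - 1" "r' = r0"
        by auto
      with "1.IH"(2)[OF not_pos True r] "1.prems"(2) True show ?thesis
        using block_inv_limit
        by (simp add: word_vec_Cons letter_def minv_mmul mat_vec_mmul mob_app_mpow_diff1[OF M_det])
    next
      case False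
      with not_pos "1.prems" show ?thesis
        by auto
    qed
  qed
qed auto

lemma attractor_ne_repeller:
  assumes "l \<in> letters" "l' \<in> letters" "\<not> inverse_letters l l'" "\<not> is_block l l'"
  shows "attractor p l' \<noteq> repeller p l"
  using assms p_dist p_eq
  by (auto simp: letters_def inverse_letters_def is_block_def attractor_def repeller_def)

text \<open>The two excluded pairs are exactly those with \<open>attractor p l' = repeller p l\<close>.\<close>
lemma mpow_attractor_ne_repeller:
  assumes "k \<noteq> 0" "l \<in> letters" "l' \<in> letters"
    and "\<not> (l' = (0, 1) \<and> l = (0, -1))" "\<not> (l' = (1, -1) \<and> l = (1, 1))"
  shows "mob_app (mpow M k) (attractor p l') \<noteq> repeller p l"
proof -
  have "mob_app (mpow M k) (p 0 1) \<notin> {p 0 2, p 1 1, p 1 2}"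
    "mob_app (mpow M k) (p 0 2) \<notin> {p 0 1, p 1 1, p 1 2}"
    "mob_app (mpow M k) (p 1 1) \<notin> {p 0 1, p 0 2, p 1 2}"
    "mob_app (mpow M k) (p 1 2) \<notin> {p 0 1, p 0 2, p 1 1}"
    using M_orbit[OF \<open>k \<noteq> 0\<close>] by auto
  with assms(2-) p_eq show ?thesis
    by (auto simp: letters_def attractor_def repeller_def)
qed

lemma mpow_x_ne_repeller:
  assumes "\<bar>k\<bar> \<le> int n" "l \<in> letters"
  shows "mob_app (mpow M k) x \<noteq> repeller p l"
proof -
  have "mob_app (mpow M k) x \<notin> {p 0 1, p 0 2, p 1 1, p 1 2}"
    using assms(1) x_orbit[of k] by auto
  with assms(2) show ?thesis
    by (auto simp: letters_def repeller_def)
qed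

lemma limit_point_ne_repeller:
  assumes nc: "no_cancellation (l # r)" and r_letters: "set (l # r) \<subseteq> letters"
    and no_block: "r = [] \<or> \<not> is_block l (hd r)" and len: "length r \<le> n"
  shows "limit_point r \<noteq> repeller p l"
proof -
  obtain k r' where split: "split_blocks r = (k, r')"
    by fastforce
  obtain u where u: "r = u @ r'" "2 * \<bar>k\<bar> \<le> int (length u)"
    using split_blocks_suffix[OF split] by blast
  have l_r: "r \<noteq> [] \<Longrightarrow> \<not> inverse_letters l (hd r)" and "no_cancellation r"
    using nc by (auto simp: successively_Cons)
  note sign = split_blocks_sign[OF \<open>no_cancellation r\<close> split]
  have "l \<in> letters"
    using r_letters by simp
  show ?thesis
  proof (cases r')
    case Nil
    have "\<bar>k\<bar> \<le> int n"
      using u len by simp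
    with Nil show ?thesis
      using mpow_x_ne_repeller[OF _ \<open>l \<in> letters\<close>] by (simp add: limit_point_def split)
  next
    case (Cons l' r'')
    have "l' \<in> letters"
      using r_letters u Cons by auto
    show ?thesis
    proof (cases "k = 0")
      case True
      with sign Cons have "r = l' # r''"
        by simp
      with l_r no_block have "\<not> inverse_letters l l'" "\<not> is_block l l'"
        by auto
      with True Cons show ?thesis
        using attractor_ne_repeller[OF \<open>l \<in> letters\<close> \<open>l' \<in> letters\<close>]
        by (simp add: limit_point_def split)
    next
      case False
      with u have "r \<noteq> []"
        by auto
      with l_r sign Cons False have "\<not> (l' = (0, 1) \<and> l = (0, -1))" "\<not> (l' = (1, -1) \<and> l = (1, 1))"
        by (auto simp: inverse_letters_def linorder_neq_iff)
      with False Cons show ?thesis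
        using mpow_attractor_ne_repeller[OF False \<open>l \<in> letters\<close> \<open>l' \<in> letters\<close>]
        by (simp add: limit_point_def split)
    qed
  qed
qed

lemma word_vec_tendsto_limit_point:
  "no_cancellation r \<Longrightarrow> set r \<subseteq> letters \<Longrightarrow> length r \<le> n \<Longrightarrow>
    proj_tendsto (word_vec r) (limit_point r) F"
proof (induction "length r" arbitrary: r rule: less_induct)
  case less
  obtain k r' where split: "split_blocks r = (k, r')"
    by fastforce
  obtain u where u: "r = u @ r'"
    using split_blocks_suffix[OF split] by blast
  have "proj_tendsto (word_vec r') (case r' of [] \<Rightarrow> x | l # _ \<Rightarrow> attractor p l) F"
  proof (cases r')
    case Nil
    then show ?thesis
      using proj_tendsto_const[OF hom_coords_nonzero, of x] by (simp add: word_vec_Nil)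
  next
    case (Cons l r'')
    with u less.prems have "no_cancellation (l # r'')" "set (l # r'') \<subseteq> letters" "length r'' < length r"
      by (auto simp: successively_append_iff)
    moreover have "r'' = [] \<or> \<not> is_block l (hd r'')"
      using split_blocks_no_block[of r k l] split Cons by (cases r'') auto
    ultimately have "limit_point r'' \<noteq> repeller p l" "proj_tendsto (word_vec r'') (limit_point r'') F"
      using limit_point_ne_repeller less by (auto simp: successively_Cons)
    with \<open>set (l # r'') \<subseteq> letters\<close> show ?thesis
      using letter_limit Cons by (simp add: word_vec_Cons)
  qed
  then show ?case
    using word_vec_blocks[OF split] by (simp add: limit_point_def split)
qed

lemma word_tendsto_attractor:
  assumes w: "is_word w" "length w \<le> n"
    and last_pair: "2 \<le> length w \<Longrightarrow> \<not> is_block (w ! (length w - 1)) (w ! (length w - 2))"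
  shows "sconv (\<lambda>e. mob_app (word_mat (M0 e) (M1 e) w) x) (attractor p (last w)) F"
proof -
  obtain l r where lr: "rev w = l # r"
    using w(1) by (cases "rev w") (auto simp: is_word_def)
  then have w_eq: "w = rev r @ [l]"
    by (metis rev_rev_ident rev.simps(2))
  have "r = [] \<or> \<not> is_block l (hd r)"
  proof (cases r)
    case (Cons h t)
    with w_eq have "w ! (length w - 1) = l" "w ! (length w - 2) = h"
      by (simp_all add: nth_append numeral_2_eq_2)
    with last_pair Cons w_eq show ?thesis
      by simp
  qed simp
  then have "limit_point (l # r) = attractor p l"
    by (simp add: limit_point_def split_blocks_non_block)
  moreover have "no_cancellation (l # r)" "set (l # r) \<subseteq> letters" "length (l # r) \<le> n"
    using is_word_no_cancellation[OF w(1)] is_word_letters[OF w(1)] w(2) lr w_eq by auto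
  ultimately have "proj_tendsto (word_vec (rev w)) (attractor p l) F"
    using word_vec_tendsto_limit_point lr by metis
  from proj_tendsto_imp_sconv[OF this] show ?thesis
    using w_eq by (simp add: word_vec_def mob_app_eq_vproj)
qed

end

lemma proj_tendsto_letter:
  fixes M0 M1 :: "'b \<Rightarrow> mat" and pe :: "nat \<Rightarrow> nat \<Rightarrow> 'b \<Rightarrow> ecomplex"
  assumes fp0: "\<forall>\<^sub>F e in F. mdet (M0 e) \<noteq> 0 \<and> is_fixed (M0 e) (pe 0 1 e) \<and> is_fixed (M0 e) (pe 0 2 e)"
    and fp1: "\<forall>\<^sub>F e in F. mdet (M1 e) \<noteq> 0 \<and> is_fixed (M1 e) (pe 1 2 e) \<and> is_fixed (M1 e) (pe 1 1 e)"
    and pe: "\<And>i j. i \<in> {0, 1} \<Longrightarrow> j \<in> {1, 2} \<Longrightarrow> sconv (pe i j) (p i j) F"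
    and "p 0 1 \<noteq> p 0 2" "p 1 2 \<noteq> p 1 1"
    and mu0: "((\<lambda>e. multiplier (M0 e) (pe 0 1 e)) \<longlongrightarrow> 0) F"
    and mu1: "((\<lambda>e. multiplier (M1 e) (pe 1 2 e)) \<longlongrightarrow> 0) F"
    and l: "l \<in> letters" and G: "proj_tendsto G q F" and q: "q \<noteq> repeller p l"
  shows "proj_tendsto (\<lambda>e. mat_vec (letter (M0 e) (M1 e) l) (G e)) (attractor p l) F"
proof -
  note H0 = proj_tendsto_hyperbolic[OF fp0 pe pe \<open>p 0 1 \<noteq> p 0 2\<close> mu0 G]
  note H1 = proj_tendsto_hyperbolic[OF fp1 pe pe \<open>p 1 2 \<noteq> p 1 1\<close> mu1 G]
  from l have "l \<in> {(0, 1), (0, -1), (1, 1), (1, -1)}"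
    by (auto simp: letters_def)
  with H0 H1 q show ?thesis
    by (auto simp: letter_def attractor_def repeller_def)
qed

theorem lemma4p11:
  fixes p :: "nat \<Rightarrow> nat \<Rightarrow> ecomplex"
    and pe :: "nat \<Rightarrow> nat \<Rightarrow> real \<Rightarrow> ecomplex"
    and M0 M1 :: "real \<Rightarrow> mat"
    and M :: mat
    and w :: "(nat \<times> int) list"
    and x :: ecomplex
  assumes p_eq: "p 0 2 = p 1 2"
    and p_dist: "p 0 2 \<noteq> p 0 1" "p 0 2 \<noteq> p 1 1" "p 0 1 \<noteq> p 1 1"
    and M0_mob: "\<And>e. e > 0 \<Longrightarrow> mdet (M0 e) \<noteq> 0"
    and M1_mob: "\<And>e. e > 0 \<Longrightarrow> mdet (M1 e) \<noteq> 0"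
    and M0_hyp: "\<And>e. e > 0 \<Longrightarrow> hyperbolic (M0 e)"
    and M1_hyp: "\<And>e. e > 0 \<Longrightarrow> hyperbolic (M1 e)"
    and fp01: "\<And>e. e > 0 \<Longrightarrow> attracting_fp (M0 e) (pe 0 1 e)"
    and fp02: "\<And>e. e > 0 \<Longrightarrow> repelling_fp (M0 e) (pe 0 2 e)"
    and fp12: "\<And>e. e > 0 \<Longrightarrow> attracting_fp (M1 e) (pe 1 2 e)"
    and fp11: "\<And>e. e > 0 \<Longrightarrow> repelling_fp (M1 e) (pe 1 1 e)"
    and pe_conv: "\<And>i j. i \<in> {0, 1} \<Longrightarrow> j \<in> {1, 2} \<Longrightarrow> sconv (pe i j) (p i j) (at_right 0)"
    and mu0: "((\<lambda>e. multiplier (M0 e) (pe 0 1 e)) \<longlongrightarrow> 0) (at_right 0)"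
    and mu1: "((\<lambda>e. multiplier (M1 e) (pe 1 2 e)) \<longlongrightarrow> 0) (at_right 0)"
    and M_mob: "mdet M \<noteq> 0"
    and M_lim: "\<exists>lam :: real \<Rightarrow> complex. (\<forall>e > 0. lam e \<noteq> 0) \<and>
                  ((\<lambda>e. msmul (lam e) (mmul (M0 e) (M1 e))) \<longlongrightarrow> M) (at_right 0)"
    and M_orbit: "\<And>k i j l s. k \<noteq> 0 \<Longrightarrow> i \<in> {0, 1} \<Longrightarrow> j \<in> {1, 2} \<Longrightarrow>
                    l \<in> {0, 1} \<Longrightarrow> s \<in> {1, 2} \<Longrightarrow> (l, s) \<noteq> (i, j) \<Longrightarrow>
                    mob_app (mpow M k) (p i j) \<noteq> p l s"
    and w_red: "reduced_word w"
    and w_last: "length w \<ge> 2 \<Longrightarrow>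
                   \<not> (w ! (length w - 1) = (0, 1) \<and> w ! (length w - 2) = (1, 1)) \<and>
                   \<not> (w ! (length w - 1) = (1, -1) \<and> w ! (length w - 2) = (0, -1))"
    and x_cond: "\<And>s i j. - int (length w) \<le> s \<Longrightarrow> s \<le> int (length w) \<Longrightarrow>
                   i \<in> {0, 1} \<Longrightarrow> j \<in> {1, 2} \<Longrightarrow> mob_app (mpow M s) x \<noteq> p i j"
  shows "sconv (\<lambda>e. mob_app (word_mat (M0 e) (M1 e) w) x)
           (case last w of (j, s) \<Rightarrow>
              (if j = 0 then (if s = 1 then p 0 1 else p 0 2)
                        else (if s = 1 then p 1 2 else p 1 1)))
           (at_right 0)"
proof -
  have pos: "\<forall>\<^sub>F e in at_right (0::real). 0 < e"
    by (rule eventually_at_right_less)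
  have fp0: "\<forall>\<^sub>F e in at_right 0. mdet (M0 e) \<noteq> 0 \<and> is_fixed (M0 e) (pe 0 1 e) \<and> is_fixed (M0 e) (pe 0 2 e)"
    using pos by eventually_elim (use M0_mob fp01 fp02 in \<open>auto simp: attracting_fp_def repelling_fp_def\<close>)
  have fp1: "\<forall>\<^sub>F e in at_right 0. mdet (M1 e) \<noteq> 0 \<and> is_fixed (M1 e) (pe 1 2 e) \<and> is_fixed (M1 e) (pe 1 1 e)"
    using pos by eventually_elim (use M1_mob fp12 fp11 in \<open>auto simp: attracting_fp_def repelling_fp_def\<close>)
  obtain lam where lam: "\<forall>e > 0. lam e \<noteq> 0" "((\<lambda>e. msmul (lam e) (mmul (M0 e) (M1 e))) \<longlongrightarrow> M) (at_right 0)"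
    using M_lim by blast
  have lam_ne: "\<forall>\<^sub>F e in at_right 0. lam e \<noteq> 0"
    using pos lam(1) by (auto elim: eventually_mono)
  have lam_inv: "((\<lambda>e. msmul (lam e) (minv (mmul (M0 e) (M1 e)))) \<longlongrightarrow> minv M) (at_right 0)"
    using tendsto_minv[OF lam(2)] by (simp add: minv_msmul)
  have "p 0 1 \<noteq> p 0 2" "p 1 2 \<noteq> p 1 1" "mdet (minv M) \<noteq> 0"
    using p_dist p_eq M_mob by auto
  interpret word_limit p M x "length w" M0 M1 "at_right 0"
    by unfold_locales
      (fact p_eq p_dist M_mob M_orbit x_cond |
        (rule proj_tendsto_letter[OF fp0 fp1 pe_conv \<open>p 0 1 \<noteq> p 0 2\<close> \<open>p 1 2 \<noteq> p 1 1\<close> mu0 mu1]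
          proj_tendsto_mat_vec[OF _ lam(2) lam_ne M_mob]
          proj_tendsto_mat_vec[OF _ lam_inv lam_ne \<open>mdet (minv M) \<noteq> 0\<close>]; assumption))+
  have "2 \<le> length w \<Longrightarrow> \<not> is_block (w ! (length w - 1)) (w ! (length w - 2))"
    using w_last by (auto simp: is_block_def)
  with w_red show ?thesis
    using word_tendsto_attractor[of w] by (simp add: reduced_word_def attractor_def)
qed

end
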